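(* Let $\Gamma$ be a finite connected $(G,3)$-geodesic-transitive graph of girth $4$ or $5$, with $G\le\mathrm{Aut}(\Gamma)$. Suppose that $G$ has a normal subgroup $N$ whose orbits on $V(\Gamma)$ all have size $m\ge2$, such that $\Gamma_N\cong K_{r,r}$ with $r\ge3$ and $\Gamma$ is a cover of $\Gamma_N$. Then $\Gamma$ is bipartite with girth $4$ and diameter at least $4$, and one of the following holds: (1) $m=2$ and $\Gamma$ is a Hadamard graph of valency $r$; (2) $\Gamma$ is a $G$-distance-transitive antipodal graph $mK_{r,r}$ which is the incidence graph of a resolvable divisible design $RGD(r,c_2,m)$, where $r=mc_2$, such that any two blocks from different parallel classes contain exactly $c_2$ common points; $\Gamma$ has intersection array $(r,r-1,r-c_2,1;1,c_2,r-1,r)$, and $c_2\ge2$, $m\ge3$; (3) $\Gamma$ is not $(G,4)$-distance-transitive.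
   Context: An $s$-geodesic is a path $(v_0,\dots,v_s)$ with $d(v_0,v_s)=s$; $\Gamma$ is $(G,s)$-geodesic-transitive if it has an $s$-geodesic and $G$ is transitive on $i$-geodesics for each $i\le s$; $(G,s)$-distance-transitive if for each $i\le s$, $G$ is transitive on ordered pairs at distance $i$, and $G$-distance-transitive if this holds for $s=\mathrm{diam}(\Gamma)$. $\Gamma_N$ has the $N$-orbits as vertices, distinct orbits adjacent iff some edge joins them; $\Gamma$ is a cover of $\Gamma_N$ if each vertex of an orbit $B$ has exactly one neighbour in each orbit adjacent to $B$. $c_2$ is the number of common neighbours of two vertices at distance $2$. A Hadamard graph of valency $2\mu$ is a distance-regular graph with intersection array $(2\mu,2\mu-1,\mu,1;1,\mu,2\mu-1,2\mu)$. A graph of diameter $d$ is antipodal if "distance $0$ or $d$" is an equivalence relation; $mK_{r,r}$ denotes an antipodal $m$-fold cover of $K_{r,r}$. A divisible design $GD(k,\lambda,n,kn)$ is $(X,\mathcal P,\mathcal B)$: $|X|=kn$, $\mathcal P$ a partition of $X$ into classes of size $n$, $\mathcal B$ a collection of $k$-subsets (blocks) each meeting every class in one point, any two points in different classes lying in exactly $\lambda$ blocks; it is resolvable, $RGD(k,\lambda,n)$, if $\mathcal B$ is partitioned into parallel classes (each a partition of $X$). The incidence graph has vertex set $X\cup\mathcal B$ with $x\sim B$ iff $x\in B$. The intersection array $(b_0,\dots,b_{d-1};c_1,\dots,c_d)$ of a distance-regular graph lists, for $v$ at distance $i$ from $u$, the numbers $b_i$ of neighbours of $v$ at distance $i+1$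 and $c_i$ at distance $i-1$ from $u$. *)

theory Defs
  imports Main
begin

definition simple_graph :: "'a set \<Rightarrow> ('a \<Rightarrow> 'a \<Rightarrow> bool) \<Rightarrow> bool" where
  "simple_graph V E \<longleftrightarrow> finite V \<and> (\<forall>x y. E x y \<longrightarrow> x \<in> V \<and> y \<in> V) \<and>
     (\<forall>x y. E x y \<longrightarrow> E y x) \<and> (\<forall>x. \<not> E x x)"

definition walk :: "'a set \<Rightarrow> ('a \<Rightarrow> 'a \<Rightarrow> bool) \<Rightarrow> 'a list \<Rightarrow> bool" where
  "walk V E xs \<longleftrightarrow> xs \<noteq> [] \<and> set xs \<subseteq> V \<and> successively E xs"

definition connected_graph :: "'a set \<Rightarrow> ('a \<Rightarrow> 'a \<Rightarrow> bool) \<Rightarrow> bool" where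
  "connected_graph V E \<longleftrightarrow> V \<noteq> {} \<and>
     (\<forall>u\<in>V. \<forall>v\<in>V. \<exists>xs. walk V E xs \<and> hd xs = u \<and> last xs = v)"

(* graph distance (meaningful for connected graphs) *)
definition gdist :: "'a set \<Rightarrow> ('a \<Rightarrow> 'a \<Rightarrow> bool) \<Rightarrow> 'a \<Rightarrow> 'a \<Rightarrow> nat" where
  "gdist V E u v = (LEAST n. \<exists>xs. walk V E xs \<and> length xs = Suc n \<and> hd xs = u \<and> last xs = v)"

definition diam :: "'a set \<Rightarrow> ('a \<Rightarrow> 'a \<Rightarrow> bool) \<Rightarrow> nat" where
  "diam V E = Max {gdist V E u v | u v. u \<in> V \<and> v \<in> V}"

definition geodesic :: "'a set \<Rightarrow> ('a \<Rightarrow> 'a \<Rightarrow> bool) \<Rightarrow> nat \<Rightarrow> 'a list \<Rightarrow> bool" where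
  "geodesic V E s xs \<longleftrightarrow> walk V E xs \<and> length xs = Suc s \<and> gdist V E (hd xs) (last xs) = s"

definition cycle :: "'a set \<Rightarrow> ('a \<Rightarrow> 'a \<Rightarrow> bool) \<Rightarrow> 'a list \<Rightarrow> bool" where
  "cycle V E xs \<longleftrightarrow> walk V E xs \<and> distinct xs \<and> length xs \<ge> 3 \<and> E (last xs) (hd xs)"

definition has_girth :: "'a set \<Rightarrow> ('a \<Rightarrow> 'a \<Rightarrow> bool) \<Rightarrow> nat \<Rightarrow> bool" where
  "has_girth V E g \<longleftrightarrow> (\<exists>xs. cycle V E xs \<and> length xs = g) \<and> (\<forall>xs. cycle V E xs \<longrightarrow> g \<le> length xs)"

definition bipartite :: "'a set \<Rightarrow> ('a \<Rightarrow> 'a \<Rightarrow> bool) \<Rightarrow> bool" where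
  "bipartite V E \<longleftrightarrow> (\<exists>X. X \<subseteq> V \<and> (\<forall>x y. E x y \<longrightarrow> (x \<in> X \<longleftrightarrow> y \<notin> X)))"

definition graph_aut :: "'a set \<Rightarrow> ('a \<Rightarrow> 'a \<Rightarrow> bool) \<Rightarrow> ('a \<Rightarrow> 'a) \<Rightarrow> bool" where
  "graph_aut V E g \<longleftrightarrow> bij_betw g V V \<and> (\<forall>x. x \<notin> V \<longrightarrow> g x = x) \<and>
     (\<forall>x\<in>V. \<forall>y\<in>V. E x y \<longleftrightarrow> E (g x) (g y))"

definition perm_inv :: "'a set \<Rightarrow> ('a \<Rightarrow> 'a) \<Rightarrow> 'a \<Rightarrow> 'a" where
  "perm_inv V g = (\<lambda>x. if x \<in> V then inv_into V g x else x)"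

definition perm_subgroup :: "'a set \<Rightarrow> ('a \<Rightarrow> 'a) set \<Rightarrow> bool" where
  "perm_subgroup V G \<longleftrightarrow> id \<in> G \<and>
     (\<forall>g\<in>G. bij_betw g V V \<and> (\<forall>x. x \<notin> V \<longrightarrow> g x = x)) \<and>
     (\<forall>g\<in>G. \<forall>h\<in>G. g \<circ> h \<in> G) \<and> (\<forall>g\<in>G. perm_inv V g \<in> G)"

definition aut_subgroup :: "'a set \<Rightarrow> ('a \<Rightarrow> 'a \<Rightarrow> bool) \<Rightarrow> ('a \<Rightarrow> 'a) set \<Rightarrow> bool" where
  "aut_subgroup V E G \<longleftrightarrow> perm_subgroup V G \<and> (\<forall>g\<in>G. graph_aut V E g)"

definition normal_subgroup :: "'a set \<Rightarrow> ('a \<Rightarrow> 'a) set \<Rightarrow> ('a \<Rightarrow> 'a) set \<Rightarrow> bool" where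
  "normal_subgroup V N G \<longleftrightarrow> N \<subseteq> G \<and> perm_subgroup V N \<and>
     (\<forall>g\<in>G. \<forall>n\<in>N. g \<circ> n \<circ> perm_inv V g \<in> N)"

definition orbit :: "('a \<Rightarrow> 'a) set \<Rightarrow> 'a \<Rightarrow> 'a set" where
  "orbit N x = {n x | n. n \<in> N}"

definition geodesic_transitive :: "'a set \<Rightarrow> ('a \<Rightarrow> 'a \<Rightarrow> bool) \<Rightarrow> ('a \<Rightarrow> 'a) set \<Rightarrow> nat \<Rightarrow> bool" where
  "geodesic_transitive V E G s \<longleftrightarrow> (\<exists>xs. geodesic V E s xs) \<and>
     (\<forall>i\<le>s. \<forall>xs ys. geodesic V E i xs \<and> geodesic V E i ys \<longrightarrow> (\<exists>g\<in>G. map g xs = ys))"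

definition transitive_at_distance :: "'a set \<Rightarrow> ('a \<Rightarrow> 'a \<Rightarrow> bool) \<Rightarrow> ('a \<Rightarrow> 'a) set \<Rightarrow> nat \<Rightarrow> bool" where
  "transitive_at_distance V E G i \<longleftrightarrow>
     (\<forall>u\<in>V. \<forall>v\<in>V. \<forall>x\<in>V. \<forall>y\<in>V. gdist V E u v = i \<and> gdist V E x y = i \<longrightarrow>
        (\<exists>g\<in>G. g u = x \<and> g v = y))"

definition distance_transitive_upto :: "'a set \<Rightarrow> ('a \<Rightarrow> 'a \<Rightarrow> bool) \<Rightarrow> ('a \<Rightarrow> 'a) set \<Rightarrow> nat \<Rightarrow> bool" where
  "distance_transitive_upto V E G s \<longleftrightarrow> (\<forall>i\<le>s. transitive_at_distance V E G i)"

definition distance_transitive :: "'a set \<Rightarrow> ('a \<Rightarrow> 'a \<Rightarrow> bool) \<Rightarrow> ('a \<Rightarrow> 'a) set \<Rightarrow> bool" where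
  "distance_transitive V E G \<longleftrightarrow> distance_transitive_upto V E G (diam V E)"

definition quot_adj :: "('a \<Rightarrow> 'a \<Rightarrow> bool) \<Rightarrow> 'a set \<Rightarrow> 'a set \<Rightarrow> bool" where
  "quot_adj E B C \<longleftrightarrow> B \<noteq> C \<and> (\<exists>x\<in>B. \<exists>y\<in>C. E x y)"

definition quotient_is_Krr :: "('a \<Rightarrow> 'a \<Rightarrow> bool) \<Rightarrow> 'a set set \<Rightarrow> nat \<Rightarrow> bool" where
  "quotient_is_Krr E Q r \<longleftrightarrow> (\<exists>L R. L \<union> R = Q \<and> L \<inter> R = {} \<and> card L = r \<and> card R = r \<and>
     (\<forall>B\<in>Q. \<forall>C\<in>Q. quot_adj E B C \<longleftrightarrow> (B \<in> L \<and> C \<in> R) \<or> (B \<in> R \<and> C \<in> L)))"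

definition is_cover :: "('a \<Rightarrow> 'a \<Rightarrow> bool) \<Rightarrow> 'a set set \<Rightarrow> bool" where
  "is_cover E Q \<longleftrightarrow> (\<forall>B\<in>Q. \<forall>C\<in>Q. quot_adj E B C \<longrightarrow> (\<forall>x\<in>B. card {y\<in>C. E x y} = 1))"

(* intersection array (b_0,...,b_{d-1}; c_1,...,c_d) given as lists bs, cs *)
definition has_intersection_array :: "'a set \<Rightarrow> ('a \<Rightarrow> 'a \<Rightarrow> bool) \<Rightarrow> nat list \<Rightarrow> nat list \<Rightarrow> bool" where
  "has_intersection_array V E bs cs \<longleftrightarrow> connected_graph V E \<and>
     length bs = diam V E \<and> length cs = diam V E \<and>
     (\<forall>u\<in>V. \<forall>v\<in>V. let i = gdist V E u v in
        (i < diam V E \<longrightarrow> card {w. E v w \<and> gdist V E u w = Suc i} = bs ! i) \<and>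
        (1 \<le> i \<longrightarrow> card {w. E v w \<and> gdist V E u w = i - 1} = cs ! (i - 1)))"

definition hadamard_graph_valency :: "'a set \<Rightarrow> ('a \<Rightarrow> 'a \<Rightarrow> bool) \<Rightarrow> nat \<Rightarrow> bool" where
  "hadamard_graph_valency V E k \<longleftrightarrow> (\<exists>\<mu>. k = 2 * \<mu> \<and>
     has_intersection_array V E [2*\<mu>, 2*\<mu> - 1, \<mu>, 1] [1, \<mu>, 2*\<mu> - 1, 2*\<mu>])"

definition antipodal_rel :: "'a set \<Rightarrow> ('a \<Rightarrow> 'a \<Rightarrow> bool) \<Rightarrow> 'a \<Rightarrow> 'a \<Rightarrow> bool" where
  "antipodal_rel V E u v \<longleftrightarrow> gdist V E u v = 0 \<or> gdist V E u v = diam V E"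

definition antipodal :: "'a set \<Rightarrow> ('a \<Rightarrow> 'a \<Rightarrow> bool) \<Rightarrow> bool" where
  "antipodal V E \<longleftrightarrow> (\<forall>u\<in>V. \<forall>v\<in>V. \<forall>w\<in>V.
      antipodal_rel V E u v \<and> antipodal_rel V E v w \<longrightarrow> antipodal_rel V E u w)"

definition antipodal_classes :: "'a set \<Rightarrow> ('a \<Rightarrow> 'a \<Rightarrow> bool) \<Rightarrow> 'a set set" where
  "antipodal_classes V E = (\<lambda>u. {v\<in>V. antipodal_rel V E u v}) ` V"

(* \<Gamma> is an antipodal m-fold cover of K_{r,r}, i.e. the graph mK_{r,r} *)
definition antipodal_cover_Krr :: "'a set \<Rightarrow> ('a \<Rightarrow> 'a \<Rightarrow> bool) \<Rightarrow> nat \<Rightarrow> nat \<Rightarrow> bool" where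
  "antipodal_cover_Krr V E m r \<longleftrightarrow> antipodal V E \<and>
     (\<forall>A\<in>antipodal_classes V E. card A = m) \<and>
     quotient_is_Krr E (antipodal_classes V E) r \<and> is_cover E (antipodal_classes V E)"

definition RGD :: "'p set \<Rightarrow> 'p set set \<Rightarrow> 'b set \<Rightarrow> ('b \<Rightarrow> 'p set) \<Rightarrow> 'b set set
                   \<Rightarrow> nat \<Rightarrow> nat \<Rightarrow> nat \<Rightarrow> bool" where
  "RGD X P Y blk Pi k lam n \<longleftrightarrow>
     finite X \<and> card X = k * n \<and>
     \<comment> \<open>P is a partition of X into classes of size n\<close>
     \<Union>P = X \<and> (\<forall>C\<in>P. C \<noteq> {} \<and> card C = n) \<and> (\<forall>C\<in>P. \<forall>D\<in>P. C \<noteq> D \<longrightarrow> C \<inter> D = {}) \<and>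
     \<comment> \<open>blocks are k-subsets meeting every class in exactly one point\<close>
     (\<forall>y\<in>Y. blk y \<subseteq> X \<and> card (blk y) = k \<and> (\<forall>C\<in>P. card (blk y \<inter> C) = 1)) \<and>
     \<comment> \<open>two points in different classes lie in exactly lam blocks\<close>
     (\<forall>x\<in>X. \<forall>x'\<in>X. (\<not> (\<exists>C\<in>P. x \<in> C \<and> x' \<in> C)) \<longrightarrow>
        card {y\<in>Y. x \<in> blk y \<and> x' \<in> blk y} = lam) \<and>
     \<comment> \<open>resolvability: Pi partitions the blocks into parallel classes\<close>
     \<Union>Pi = Y \<and> (\<forall>\<pi>\<in>Pi. \<pi> \<noteq> {}) \<and> (\<forall>\<pi>\<in>Pi. \<forall>\<rho>\<in>Pi. \<pi> \<noteq> \<rho> \<longrightarrow> \<pi> \<inter> \<rho> = {}) \<and>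
     (\<forall>\<pi>\<in>Pi. \<forall>x\<in>X. \<exists>!y. y \<in> \<pi> \<and> x \<in> blk y)"

(* \<Gamma> is (isomorphic to) the incidence graph of the design with point set X and blocks
   indexed by Y, block y consisting of the neighbours of y *)
definition incidence_graph_of :: "'a set \<Rightarrow> ('a \<Rightarrow> 'a \<Rightarrow> bool) \<Rightarrow> 'a set \<Rightarrow> 'a set \<Rightarrow> bool" where
  "incidence_graph_of V E X Y \<longleftrightarrow> X \<union> Y = V \<and> X \<inter> Y = {} \<and>
     (\<forall>u v. E u v \<longrightarrow> (u \<in> X \<and> v \<in> Y) \<or> (u \<in> Y \<and> v \<in> X))"

definition nbr_block :: "('a \<Rightarrow> 'a \<Rightarrow> bool) \<Rightarrow> 'a set \<Rightarrow> 'a \<Rightarrow> 'a set" where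
  "nbr_block E X y = {x\<in>X. E x y}"

end

(*
  The N-orbits are blocks for G, and G is arc-transitive, so every edge looks like an edge
  between an orbit of one side L of the quotient K_{r,r} and an orbit of the other side R.
  Hence the union X of the orbits in L is a bipartition of the graph, and girth 5 is
  impossible. Since the graph covers its quotient, a vertex has at most one neighbour in each
  orbit, so distinct vertices of an orbit have no common neighbour and lie at distance at
  least 4; thus the diameter is at least 4.

  If G is moreover transitive on pairs at distance at most 4, the distance-4 pairs are exactly
  the pairs of distinct vertices of an orbit, the diameter is 4, the number c2 of common
  neighbours of vertices at distance 2 is constant, and double counting the edges between the
  neighbourhood of a vertex and another orbit on its side gives r = m c2. The orbits are then
  the antipodal classes, bipartiteness gives b_i + c_i = r and hence the intersection array,
  and the two sides X and V - X, partitioned into orbits, are the points and blocks of a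
  resolvable divisible design. For m = 2 the array is that of a Hadamard graph.
*)
theory Submission
  imports Defs
begin

lemma sum_card_filter_swap:
  assumes "finite A" "finite B"
  shows "(\<Sum>a\<in>A. card {b\<in>B. P a b}) = (\<Sum>b\<in>B. card {a\<in>A. P a b})"
proof -
  have card_filter: "card {x\<in>S. Q x} = (\<Sum>x\<in>S. if Q x then 1 else 0)"
    if "finite S" for S and Q :: "_ \<Rightarrow> bool"
    using that by (simp add: sum.inter_filter[symmetric])
  have "(\<Sum>a\<in>A. card {b\<in>B. P a b}) = (\<Sum>a\<in>A. \<Sum>b\<in>B. if P a b then 1 else 0)"
    using card_filter[OF assms(2)] by simp
  also have "\<dots> = (\<Sum>b\<in>B. \<Sum>a\<in>A. if P a b then 1 else 0)" by (rule sum.swap)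
  also have "\<dots> = (\<Sum>b\<in>B. card {a\<in>A. P a b})"
    using card_filter[OF assms(1)] by simp
  finally show ?thesis .
qed

section \<open>Permutation groups and orbits\<close>

lemma perm_inv_apply: "bij_betw g V V \<Longrightarrow> x \<in> V \<Longrightarrow> perm_inv V g (g x) = x"
  by (simp add: perm_inv_def bij_betw_apply bij_betw_inv_into_left)

lemma perm_subgroup_bij: "perm_subgroup V N \<Longrightarrow> n \<in> N \<Longrightarrow> bij_betw n V V"
  by (simp add: perm_subgroup_def)

lemma orbit_subset:
  assumes "perm_subgroup V N" "x \<in> V" shows "orbit N x \<subseteq> V"
  using assms perm_subgroup_bij bij_betw_apply unfolding orbit_def by fastforce

lemma orbit_refl: "perm_subgroup V N \<Longrightarrow> x \<in> orbit N x"
  unfolding orbit_def perm_subgroup_def by (auto intro: exI[of _ id])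

lemma orbit_eq:
  assumes N: "perm_subgroup V N" and x: "x \<in> V" and y: "y \<in> orbit N x"
  shows "orbit N y = orbit N x"
proof -
  obtain n where n: "n \<in> N" "y = n x" using y unfolding orbit_def by blast
  have comp: "n' \<circ> n'' \<in> N" if "n' \<in> N" "n'' \<in> N" for n' n''
    using N that by (simp add: perm_subgroup_def)
  have n_inv: "perm_inv V n \<in> N" using N n by (simp add: perm_subgroup_def)
  have "z \<in> orbit N x" if z: "z \<in> orbit N y" for z
  proof -
    obtain n' where n': "n' \<in> N" "z = n' y" using z by (auto simp: orbit_def)
    then have "z = (n' \<circ> n) x" using n by simp
    then show ?thesis using comp n n' unfolding orbit_def by blast
  qed
  moreover have "z \<in> orbit N y" if z: "z \<in> orbit N x" for z
  proof -
    obtain n' where n': "n' \<in> N" "z = n' x" using z by (auto simp: orbit_def)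
    have "x = perm_inv V n y" using n x perm_inv_apply perm_subgroup_bij[OF N] by metis
    then have "z = (n' \<circ> perm_inv V n) y" using n' by simp
    then show ?thesis using comp n' n_inv unfolding orbit_def by blast
  qed
  ultimately show ?thesis by blast
qed

lemma orbits_disjoint:
  assumes "perm_subgroup V N" "x \<in> V" "y \<in> V" "orbit N x \<noteq> orbit N y"
  shows "orbit N x \<inter> orbit N y = {}"
proof (rule ccontr)
  assume "orbit N x \<inter> orbit N y \<noteq> {}"
  then obtain z where z: "z \<in> orbit N x" "z \<in> orbit N y" by blast
  have "orbit N z = orbit N x" "orbit N z = orbit N y"
    using orbit_eq[OF assms(1,2) z(1)] orbit_eq[OF assms(1,3) z(2)] .
  then show False using assms(4) by simp
qed

lemma normal_subgroup_orbit_image: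
  assumes "normal_subgroup V N G" "g \<in> G" "bij_betw g V V" "x \<in> V" "y \<in> orbit N x"
  shows "g y \<in> orbit N (g x)"
proof -
  obtain n where n: "n \<in> N" "y = n x" using assms(5) unfolding orbit_def by blast
  have "g y = (g \<circ> n \<circ> perm_inv V g) (g x)" using n by (simp add: perm_inv_apply[OF assms(3,4)])
  moreover have "g \<circ> n \<circ> perm_inv V g \<in> N"
    using assms(1,2) n(1) unfolding normal_subgroup_def by blast
  ultimately show ?thesis unfolding orbit_def by blast
qed

section \<open>Walks, distances and bipartitions\<close>

lemma walk_nth: "walk V E xs \<longleftrightarrow> xs \<noteq> [] \<and> (\<forall>i<length xs. xs!i \<in> V) \<and>
   (\<forall>i. Suc i < length xs \<longrightarrow> E (xs!i) (xs!Suc i))"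
  unfolding walk_def successively_conv_nth by (auto simp: set_conv_nth)

definition bipartition :: "('a \<Rightarrow> 'a \<Rightarrow> bool) \<Rightarrow> 'a set \<Rightarrow> bool" where
  "bipartition E X \<longleftrightarrow> (\<forall>x y. E x y \<longrightarrow> (x \<in> X \<longleftrightarrow> y \<notin> X))"

lemma bipartition_path_parity:
  assumes "bipartition E X" "\<forall>i<n. E (p i) (p (Suc i))"
  shows "(p 0 \<in> X \<longleftrightarrow> p n \<in> X) \<longleftrightarrow> even n"
  using assms(2)
proof (induction n)
  case (Suc n)
  then have "(p 0 \<in> X \<longleftrightarrow> p n \<in> X) \<longleftrightarrow> even n" by simp
  moreover have "p n \<in> X \<longleftrightarrow> p (Suc n) \<notin> X" using Suc.prems assms(1) by (simp add: bipartition_def)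
  ultimately show ?case by (cases "p 0 \<in> X"; cases "p n \<in> X") simp_all
qed simp

lemma bipartition_cycle_even:
  assumes X: "bipartition E X" and c: "cycle V E xs"
  shows "even (length xs)"
proof -
  define n where "n = length xs - 1"
  have len: "length xs = Suc n" using c n_def by (auto simp: cycle_def)
  have "\<forall>i<n. E (xs ! i) (xs ! Suc i)" using c len by (simp add: cycle_def walk_nth)
  then have parity: "(xs ! 0 \<in> X \<longleftrightarrow> xs ! n \<in> X) \<longleftrightarrow> even n"
    by (rule bipartition_path_parity[OF X])
  have "xs \<noteq> []" using len by auto
  then have "E (xs ! n) (xs ! 0)"
    using c len by (simp add: cycle_def last_conv_nth hd_conv_nth)
  then have "xs ! n \<in> X \<longleftrightarrow> xs ! 0 \<notin> X" using X unfolding bipartition_def by blast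
  then show ?thesis using parity len by simp
qed

lemma cycle_4E:
  assumes "cycle V E xs" "length xs = 4"
  obtains a b c d where "E a b" "E b c" "E c d" "E d a" "a \<noteq> c" "b \<noteq> d"
proof -
  obtain a b c d where "xs = [a, b, c, d]"
    using assms(2) by (auto simp: numeral_eq_Suc length_Suc_conv)
  then show ?thesis using assms(1) that by (auto simp: cycle_def walk_def)
qed

locale connected_simple_graph =
  fixes V :: "'a set" and E :: "'a \<Rightarrow> 'a \<Rightarrow> bool"
  assumes simple: "simple_graph V E" and connected: "connected_graph V E"
begin

lemma finite_V: "finite V"
  using simple by (simp add: simple_graph_def)

lemma adj_in_V:
  assumes "E x y" shows "x \<in> V" "y \<in> V"
  using simple assms by (simp_all add: simple_graph_def)

lemma adj_sym: "E x y \<Longrightarrow> E y x"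
  using simple by (simp add: simple_graph_def)

lemma adj_irrefl: "\<not> E x x"
  using simple by (simp add: simple_graph_def)

lemma finite_neighbours: "finite {w. E v w}"
  using finite_V adj_in_V(2) by (blast intro: finite_subset)

lemma gdist_shortest_walk:
  assumes "u \<in> V" "v \<in> V"
  obtains xs where "walk V E xs" "length xs = Suc (gdist V E u v)" "hd xs = u" "last xs = v"
proof -
  obtain xs where xs: "walk V E xs" "hd xs = u" "last xs = v"
    using connected assms by (auto simp: connected_graph_def)
  then have "length xs = Suc (length xs - 1)" by (simp add: walk_def)
  then have "\<exists>n xs. walk V E xs \<and> length xs = Suc n \<and> hd xs = u \<and> last xs = v"
    using xs by blast
  then have "\<exists>xs. walk V E xs \<and> length xs = Suc (gdist V E u v) \<and> hd xs = u \<and> last xs = v"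
    unfolding gdist_def by (rule LeastI_ex)
  then show ?thesis using that by blast
qed

lemma gdist_le_walk:
  assumes "walk V E xs" "length xs = Suc n" "hd xs = u" "last xs = v"
  shows "gdist V E u v \<le> n"
  unfolding gdist_def using assms by (intro Least_le) blast

lemma gdist_self: "u \<in> V \<Longrightarrow> gdist V E u u = 0"
  using gdist_le_walk[of "[u]" 0 u u] by (simp add: walk_def)

lemma gdist_eq_0_iff:
  assumes "u \<in> V" "v \<in> V" shows "gdist V E u v = 0 \<longleftrightarrow> u = v"
proof
  assume "gdist V E u v = 0"
  then obtain xs where "length xs = 1" "hd xs = u" "last xs = v"
    using gdist_shortest_walk[OF assms] by (metis One_nat_def)
  then show "u = v" by (cases xs) auto
qed (simp add: gdist_self assms)

lemma gdist_eq_1_iff: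
  assumes "u \<in> V" "v \<in> V" shows "gdist V E u v = 1 \<longleftrightarrow> E u v"
proof
  assume "gdist V E u v = 1"
  then obtain xs where xs: "walk V E xs" "length xs = 2" "hd xs = u" "last xs = v"
    using gdist_shortest_walk[OF assms] by (metis Suc_1)
  then obtain a b where "xs = [a, b]"
    by (cases xs; cases "tl xs") auto
  then show "E u v" using xs by (simp add: walk_def)
next
  assume uv: "E u v"
  then have "gdist V E u v \<le> 1"
    using gdist_le_walk[of "[u, v]" 1 u v] assms by (simp add: walk_def)
  moreover have "gdist V E u v \<noteq> 0"
    using gdist_eq_0_iff[OF assms] uv adj_irrefl by auto
  ultimately show "gdist V E u v = 1" by simp
qed

lemma gdist_adj: "E u v \<Longrightarrow> gdist V E u v = 1"
  using gdist_eq_1_iff adj_in_V by blast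

lemma walk_rev: "walk V E xs \<Longrightarrow> walk V E (rev xs)"
  unfolding walk_def using adj_sym by (auto intro: successively_mono)

lemma walk_append:
  assumes "walk V E xs" "walk V E ys" "last xs = hd ys"
  shows "walk V E (xs @ tl ys)"
  using assms by (cases ys) (auto simp: walk_def successively_append_iff successively_Cons
      split: list.splits)

lemma gdist_sym:
  assumes "u \<in> V" "v \<in> V" shows "gdist V E u v = gdist V E v u"
proof -
  have le: "gdist V E b a \<le> gdist V E a b" if ab: "a \<in> V" "b \<in> V" for a b
  proof -
    obtain xs where "walk V E xs" "length xs = Suc (gdist V E a b)" "hd xs = a" "last xs = b"
      using gdist_shortest_walk[OF ab] by blast
    moreover from this have "xs \<noteq> []" by auto
    ultimately show ?thesis using gdist_le_walk[of "rev xs"] walk_rev by (simp add: hd_rev last_rev)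
  qed
  show ?thesis using le[OF assms] le[OF assms(2,1)] by simp
qed

lemma gdist_triangle:
  assumes "u \<in> V" "v \<in> V" "w \<in> V"
  shows "gdist V E u w \<le> gdist V E u v + gdist V E v w"
proof -
  obtain xs where xs: "walk V E xs" "length xs = Suc (gdist V E u v)" "hd xs = u" "last xs = v"
    using gdist_shortest_walk assms by blast
  obtain ys where ys: "walk V E ys" "length ys = Suc (gdist V E v w)" "hd ys = v" "last ys = w"
    using gdist_shortest_walk assms by blast
  have "xs \<noteq> []" "ys \<noteq> []" using xs ys by auto
  then have "hd (xs @ tl ys) = u" "last (xs @ tl ys) = w"
    using xs ys by (cases ys; auto simp: last_append)+
  moreover have "length (xs @ tl ys) = Suc (gdist V E u v + gdist V E v w)" using xs ys by simp
  ultimately show ?thesis using gdist_le_walk walk_append xs ys by metis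
qed

lemma gdist_adj_le:
  assumes "u \<in> V" "E v w" shows "gdist V E u w \<le> Suc (gdist V E u v)"
  using gdist_triangle[OF assms(1) adj_in_V[OF assms(2)]] gdist_adj[OF assms(2)] by simp

lemma gdist_SucE:
  assumes "u \<in> V" "v \<in> V" "gdist V E u v = Suc n"
  obtains w where "E w v" "gdist V E u w = n"
proof -
  obtain xs where xs: "walk V E xs" "length xs = Suc (Suc n)" "hd xs = u" "last xs = v"
    using gdist_shortest_walk[OF assms(1,2)] assms(3) by metis
  have "E (xs ! n) (xs ! Suc n)" using xs(1,2) by (simp add: walk_nth)
  moreover have "xs ! Suc n = v" using xs(2,4) last_conv_nth[of xs] by force
  ultimately have adj: "E (xs ! n) v" by simp
  have "walk V E (take (Suc n) xs)" using xs by (auto simp: walk_nth)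
  moreover have "last (take (Suc n) xs) = xs ! n" using xs(2) by (simp add: take_Suc_conv_app_nth)
  moreover have "hd (take (Suc n) xs) = u" using xs(2,3) by (simp add: hd_conv_nth)
  ultimately have "gdist V E u (xs ! n) \<le> n" using gdist_le_walk xs(2) by simp
  moreover have "Suc n \<le> Suc (gdist V E u (xs ! n))"
    using gdist_adj_le[OF assms(1) adj] assms(3) by simp
  ultimately show ?thesis using that adj by simp
qed

lemma gdist_intermediate:
  assumes "u \<in> V" "v \<in> V" "k \<le> gdist V E u v"
  obtains w where "w \<in> V" "gdist V E u w = k"
  using assms(2,3)
proof (induction "gdist V E u v" arbitrary: v)
  case 0
  then show ?case by simp
next
  case (Suc n)
  show ?case
  proof (cases "k = Suc n")
    case False
    obtain w where "E w v" "gdist V E u w = n"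
      using gdist_SucE[OF assms(1) Suc.prems(2) Suc.hyps(2)[symmetric]] .
    then show ?thesis using Suc adj_in_V False by (metis le_Suc_eq)
  qed (use Suc in metis)
qed

lemma finite_distances: "finite {gdist V E u v | u v. u \<in> V \<and> v \<in> V}"
  using finite_image_set2[of "\<lambda>u. u \<in> V" "\<lambda>v. v \<in> V" "gdist V E"] finite_V by simp

lemma gdist_le_diam: "u \<in> V \<Longrightarrow> v \<in> V \<Longrightarrow> gdist V E u v \<le> diam V E"
  unfolding diam_def using finite_distances by (intro Max_ge) auto

lemma diam_le:
  assumes "\<And>u v. u \<in> V \<Longrightarrow> v \<in> V \<Longrightarrow> gdist V E u v \<le> d" shows "diam V E \<le> d"
proof -
  have "V \<noteq> {}" using connected by (simp add: connected_graph_def)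
  then have "{gdist V E u v | u v. u \<in> V \<and> v \<in> V} \<noteq> {}" by blast
  then show ?thesis unfolding diam_def using finite_distances assms by (subst Max_le_iff) auto
qed

lemma bipartition_gdist_parity:
  assumes X: "bipartition E X" and "u \<in> V" "v \<in> V"
  shows "(u \<in> X \<longleftrightarrow> v \<in> X) \<longleftrightarrow> even (gdist V E u v)"
proof -
  obtain xs where xs: "walk V E xs" "length xs = Suc (gdist V E u v)" "hd xs = u" "last xs = v"
    using gdist_shortest_walk assms(2,3) by blast
  then have "\<forall>i<gdist V E u v. E (xs ! i) (xs ! Suc i)" by (simp add: walk_nth)
  moreover have "xs \<noteq> []" using xs(2) by auto
  then have "xs ! 0 = u" "xs ! gdist V E u v = v"
    using xs(2-4) by (metis hd_conv_nth, metis last_conv_nth diff_Suc_1)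
  ultimately show ?thesis using bipartition_path_parity[OF X] by metis
qed

lemma bipartition_adj_gdist:
  assumes X: "bipartition E X" and u: "u \<in> V" and vw: "E v w"
  shows "gdist V E u w = Suc (gdist V E u v) \<or> Suc (gdist V E u w) = gdist V E u v"
proof -
  have "v \<in> X \<longleftrightarrow> w \<notin> X" using X vw by (simp add: bipartition_def)
  then have "even (gdist V E u v) \<longleftrightarrow> \<not> even (gdist V E u w)"
    using bipartition_gdist_parity[OF X u] adj_in_V[OF vw] by blast
  then have "gdist V E u w \<noteq> gdist V E u v" by auto
  then show ?thesis
    using gdist_adj_le[OF u vw] gdist_adj_le[OF u adj_sym[OF vw]] by linarith
qed

lemma bipartition_card_farther_closer:
  assumes X: "bipartition E X" and u: "u \<in> V"
  shows "card {w. E v w \<and> gdist V E u w = Suc (gdist V E u v)}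
       + card {w. E v w \<and> Suc (gdist V E u w) = gdist V E u v} = card {w. E v w}"
proof -
  let ?F = "{w. E v w \<and> gdist V E u w = Suc (gdist V E u v)}"
  let ?C = "{w. E v w \<and> Suc (gdist V E u w) = gdist V E u v}"
  have "{w. E v w} = ?F \<union> ?C" using bipartition_adj_gdist[OF X u] by blast
  moreover have "finite ?F" "finite ?C"
    using finite_neighbours by (auto intro: finite_subset[rotated])
  moreover have "?F \<inter> ?C = {}" by auto
  ultimately show ?thesis using card_Un_disjoint by metis
qed

end

locale graph_with_aut_group = connected_simple_graph +
  fixes G :: "('a \<Rightarrow> 'a) set"
  assumes aut_subgroup: "aut_subgroup V E G"
begin

lemma aut_bij: "g \<in> G \<Longrightarrow> bij_betw g V V"
  using aut_subgroup by (simp add: aut_subgroup_def graph_aut_def)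

lemma aut_in_V: "g \<in> G \<Longrightarrow> x \<in> V \<Longrightarrow> g x \<in> V"
  using aut_bij bij_betw_apply by metis

lemma aut_adj_iff: "g \<in> G \<Longrightarrow> x \<in> V \<Longrightarrow> y \<in> V \<Longrightarrow> E (g x) (g y) \<longleftrightarrow> E x y"
  using aut_subgroup by (simp add: aut_subgroup_def graph_aut_def)

lemma aut_adj: "g \<in> G \<Longrightarrow> E x y \<Longrightarrow> E (g x) (g y)"
  using aut_adj_iff adj_in_V by blast

lemma perm_inv_aut: "g \<in> G \<Longrightarrow> perm_inv V g \<in> G"
  using aut_subgroup by (simp add: aut_subgroup_def perm_subgroup_def)

lemma gdist_aut_le:
  assumes g: "g \<in> G" and "u \<in> V" "v \<in> V"
  shows "gdist V E (g u) (g v) \<le> gdist V E u v"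
proof -
  obtain xs where xs: "walk V E xs" "length xs = Suc (gdist V E u v)" "hd xs = u" "last xs = v"
    using gdist_shortest_walk assms by blast
  have "walk V E (map g xs)"
    using xs(1) aut_in_V[OF g] aut_adj[OF g] by (simp add: walk_nth)
  moreover have "xs \<noteq> []" using xs by auto
  ultimately show ?thesis using gdist_le_walk[of "map g xs"] xs by (simp add: hd_map last_map)
qed

lemma gdist_aut:
  assumes g: "g \<in> G" and u: "u \<in> V" and v: "v \<in> V"
  shows "gdist V E (g u) (g v) = gdist V E u v"
proof -
  have "gdist V E (perm_inv V g (g u)) (perm_inv V g (g v)) \<le> gdist V E (g u) (g v)"
    using gdist_aut_le perm_inv_aut aut_in_V assms by blast
  then show ?thesis
    using gdist_aut_le[OF assms] perm_inv_apply[OF aut_bij[OF g]] u v by simp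
qed

lemma card_layer_aut:
  assumes g: "g \<in> G" and u: "u \<in> V" and v: "v \<in> V"
  shows "card {w. E (g v) w \<and> gdist V E (g u) w = j} = card {w. E v w \<and> gdist V E u w = j}"
proof -
  have "{w. E (g v) w \<and> gdist V E (g u) w = j} = g ` {w. E v w \<and> gdist V E u w = j}"
  proof (intro equalityI subsetI)
    fix x assume x: "x \<in> {w. E (g v) w \<and> gdist V E (g u) w = j}"
    then have "x \<in> V" using adj_in_V by blast
    then obtain w where w: "w \<in> V" "x = g w"
      using aut_bij[OF g] by (metis bij_betw_imp_surj_on imageE)
    then show "x \<in> g ` {w. E v w \<and> gdist V E u w = j}"
      using x aut_adj_iff[OF g v w(1)] gdist_aut[OF g u w(1)] by auto
  next
    fix x assume "x \<in> g ` {w. E v w \<and> gdist V E u w = j}"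
    then obtain w where "E v w" "gdist V E u w = j" "x = g w" by blast
    then show "x \<in> {w. E (g v) w \<and> gdist V E (g u) w = j}"
      using aut_adj[OF g] gdist_aut[OF g u adj_in_V(2)] by blast
  qed
  moreover have "{w. E v w \<and> gdist V E u w = j} \<subseteq> V" using adj_in_V by blast
  then have "inj_on g {w. E v w \<and> gdist V E u w = j}"
    using inj_on_subset bij_betw_imp_inj_on[OF aut_bij[OF g]] by blast
  ultimately show ?thesis by (simp add: card_image)
qed

lemma card_layer_transitive:
  assumes "transitive_at_distance V E G i" "u \<in> V" "v \<in> V" "x \<in> V" "y \<in> V"
    and "gdist V E u v = i" "gdist V E x y = i"
  shows "card {w. E y w \<and> gdist V E x w = j} = card {w. E v w \<and> gdist V E u w = j}"
proof -
  obtain g where g: "g \<in> G" "g u = x" "g v = y"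
    using assms unfolding transitive_at_distance_def by blast
  then show ?thesis using card_layer_aut[OF g(1) assms(2,3)] by simp
qed

lemma geodesic_edge: "E x y \<Longrightarrow> geodesic V E 1 [x, y]"
  using adj_in_V gdist_adj by (simp add: geodesic_def walk_def)

lemma geodesic_transitive_arc_transitive:
  assumes "geodesic_transitive V E G s" "1 \<le> s" "E x y" "E x' y'"
  shows "\<exists>g\<in>G. g x = x' \<and> g y = y'"
proof -
  have "\<exists>g\<in>G. map g [x, y] = [x', y']"
    using assms geodesic_edge unfolding geodesic_transitive_def by blast
  then show ?thesis by simp
qed

end

section \<open>Covers of complete bipartite graphs\<close>

text \<open>\<open>L\<close> and \<open>R\<close> are the two sides of the complete bipartite quotient, as provided
  by \<^const>\<open>quotient_is_Krr\<close>.\<close>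

locale Krr_cover = graph_with_aut_group +
  fixes N :: "('a \<Rightarrow> 'a) set" and m r :: nat and L R :: "'a set set"
  assumes geodesic_transitive: "geodesic_transitive V E G 3"
    and girth: "has_girth V E 4 \<or> has_girth V E 5"
    and normal: "normal_subgroup V N G"
    and orbit_card: "\<forall>x\<in>V. card (orbit N x) = m" and m_ge_2: "m \<ge> 2"
    and r_ge_3: "r \<ge> 3"
    and cover: "is_cover E (orbit N ` V)"
    and L_R_orbits: "L \<union> R = orbit N ` V" and L_R_disjoint: "L \<inter> R = {}"
    and card_L: "card L = r" and card_R: "card R = r"
    and quot_adj_L_R: "\<forall>B\<in>orbit N ` V. \<forall>C\<in>orbit N ` V.
       quot_adj E B C \<longleftrightarrow> (B \<in> L \<and> C \<in> R) \<or> (B \<in> R \<and> C \<in> L)"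
begin

lemma quot_adj_orbits_iff:
  "B \<in> orbit N ` V \<Longrightarrow> C \<in> orbit N ` V \<Longrightarrow>
     quot_adj E B C \<longleftrightarrow> (B \<in> L \<and> C \<in> R) \<or> (B \<in> R \<and> C \<in> L)"
  by (rule quot_adj_L_R[rule_format])

lemma N_perm_subgroup: "perm_subgroup V N"
  using normal by (simp add: normal_subgroup_def)

lemma orbit_in_V: "x \<in> V \<Longrightarrow> orbit N x \<subseteq> V"
  by (rule orbit_subset[OF N_perm_subgroup])

lemma self_in_orbit: "x \<in> orbit N x"
  by (rule orbit_refl[OF N_perm_subgroup])

lemma orbit_of_orbit_member: "x \<in> V \<Longrightarrow> y \<in> orbit N x \<Longrightarrow> orbit N y = orbit N x"
  by (rule orbit_eq[OF N_perm_subgroup])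

lemma aut_maps_orbit: "g \<in> G \<Longrightarrow> x \<in> V \<Longrightarrow> y \<in> orbit N x \<Longrightarrow> g y \<in> orbit N (g x)"
  using normal_subgroup_orbit_image[OF normal] aut_bij by blast

lemma orbit_other_point:
  assumes "x \<in> V" obtains y where "y \<in> orbit N x" "y \<noteq> x"
proof -
  have "\<not> orbit N x \<subseteq> {x}"
    using orbit_card assms m_ge_2 card_mono[of "{x}" "orbit N x"] by force
  then show ?thesis using that by blast
qed

lemma L_subset_orbits: "L \<subseteq> orbit N ` V" and R_subset_orbits: "R \<subseteq> orbit N ` V"
  using L_R_orbits by auto

lemma orbit_class_card: "C \<in> orbit N ` V \<Longrightarrow> card C = m"
  using orbit_card by blast

lemma orbit_class_nonempty: "C \<in> orbit N ` V \<Longrightarrow> C \<noteq> {}"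
  using self_in_orbit by blast

lemma orbit_classes_disjoint:
  assumes "C \<in> orbit N ` V" "D \<in> orbit N ` V" "C \<noteq> D" shows "C \<inter> D = {}"
proof -
  obtain c d where "c \<in> V" "C = orbit N c" "d \<in> V" "D = orbit N d" using assms(1,2) by blast
  then show ?thesis using orbits_disjoint[OF N_perm_subgroup] assms(3) by simp
qed

lemma orbits_pairwise_disjnt: "pairwise disjnt (orbit N ` V)"
  unfolding pairwise_def disjnt_def using orbit_classes_disjoint by blast

definition X :: "'a set" where "X = \<Union>L"

lemma orbit_in_L_iff:
  assumes x: "x \<in> V" shows "orbit N x \<in> L \<longleftrightarrow> x \<in> X"
proof
  assume "x \<in> X"
  then obtain C where C: "C \<in> L" "x \<in> C" by (auto simp: X_def)
  then obtain c where "c \<in> V" "C = orbit N c" using L_R_orbits by blast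
  then have "orbit N x = C" using orbit_of_orbit_member C(2) by simp
  then show "orbit N x \<in> L" using C(1) by simp
qed (use self_in_orbit X_def in blast)

lemma orbit_in_R_iff:
  assumes "x \<in> V" shows "orbit N x \<in> R \<longleftrightarrow> x \<notin> X"
proof -
  have "orbit N x \<in> L \<union> R" using L_R_orbits assms by simp
  then show ?thesis using orbit_in_L_iff[OF assms] L_R_disjoint by blast
qed

lemma X_subset_V: "X \<subseteq> V"
proof
  fix x assume "x \<in> X"
  then obtain C where "C \<in> L" "x \<in> C" by (auto simp: X_def)
  then obtain c where "c \<in> V" "x \<in> orbit N c" using L_R_orbits by blast
  then show "x \<in> V" using orbit_in_V by blast
qed

lemma L_eq: "L = orbit N ` X"
proof (intro equalityI subsetI)
  fix C assume C: "C \<in> L"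
  then obtain c where "c \<in> V" "C = orbit N c" using L_R_orbits by blast
  then show "C \<in> orbit N ` X" using C orbit_in_L_iff by blast
qed (use orbit_in_L_iff X_subset_V in blast)

lemma R_eq: "R = orbit N ` (V - X)"
proof (intro equalityI subsetI)
  fix C assume C: "C \<in> R"
  then obtain c where "c \<in> V" "C = orbit N c" using L_R_orbits by blast
  then show "C \<in> orbit N ` (V - X)" using C orbit_in_R_iff by blast
qed (use orbit_in_R_iff in blast)

lemma card_orbits_of_side: "card (orbit N ` {w \<in> V. w \<in> X \<longleftrightarrow> P}) = r"
proof (cases P)
  case True
  then have "{w \<in> V. w \<in> X \<longleftrightarrow> P} = X" using X_subset_V by blast
  then show ?thesis using card_L L_eq by simp
next
  case False
  then have "{w \<in> V. w \<in> X \<longleftrightarrow> P} = V - X" by blast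
  then show ?thesis using card_R R_eq by simp
qed

lemma orbit_same_side:
  assumes "x \<in> V" "y \<in> orbit N x" shows "y \<in> X \<longleftrightarrow> x \<in> X"
proof -
  have "y \<in> V" using orbit_in_V assms by blast
  then show ?thesis
    using orbit_in_L_iff assms(1) orbit_of_orbit_member[OF assms] by metis
qed

lemma card_X: "card X = r * m"
proof -
  have "pairwise disjnt L" "\<forall>C\<in>L. card C = m"
    using pairwise_subset[OF orbits_pairwise_disjnt L_subset_orbits]
      orbit_class_card L_subset_orbits by auto
  moreover have "finite C" if "C \<in> L" for C
    using that X_subset_V finite_V unfolding X_def by (meson Union_upper finite_subset)
  ultimately have "card X = (\<Sum>C\<in>L. m)" unfolding X_def by (simp add: card_Union_disjoint)
  then show ?thesis using card_L by simp
qed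

lemma card_neighbours_in_orbit:
  assumes "x \<in> V" "y \<in> V" "x \<in> X \<longleftrightarrow> y \<notin> X"
  shows "card {z \<in> orbit N y. E x z} = 1"
proof -
  have "(orbit N x \<in> L \<and> orbit N y \<in> R) \<or> (orbit N x \<in> R \<and> orbit N y \<in> L)"
    using assms orbit_in_L_iff orbit_in_R_iff by simp
  then have "quot_adj E (orbit N x) (orbit N y)" using quot_adj_orbits_iff assms(1,2) by simp
  then show ?thesis using cover assms self_in_orbit unfolding is_cover_def by blast
qed

lemma ex1_neighbour_in_orbit:
  assumes "x \<in> V" "y \<in> V" "x \<in> X \<longleftrightarrow> y \<notin> X"
  shows "\<exists>!z. z \<in> orbit N y \<and> E x z"
proof -
  obtain z where "{z \<in> orbit N y. E x z} = {z}"
    using card_neighbours_in_orbit[OF assms] card_1_singletonE by blast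
  then show ?thesis by (intro ex1I[of _ z]) blast+
qed

text \<open>An edge inside an orbit would be mapped by arc-transitivity onto an edge between an
  \<open>L\<close>-orbit and an \<open>R\<close>-orbit, but \<open>G\<close> permutes the orbits.\<close>

lemma adj_orbits_distinct:
  assumes "E x y" shows "orbit N y \<noteq> orbit N x"
proof
  assume same: "orbit N y = orbit N x"
  have "L \<noteq> {}" "R \<noteq> {}" using card_L card_R r_ge_3 by auto
  then obtain C D where CD: "C \<in> L" "D \<in> R" by blast
  moreover have "C \<in> orbit N ` V" "D \<in> orbit N ` V" using CD L_R_orbits by auto
  ultimately have "quot_adj E C D" using quot_adj_orbits_iff by simp
  then obtain x' y' where x'y': "x' \<in> C" "y' \<in> D" "E x' y'" "C \<noteq> D"
    unfolding quot_adj_def by blast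
  obtain g where g: "g \<in> G" "g x = x'" "g y = y'"
    using geodesic_transitive_arc_transitive[OF geodesic_transitive _ assms x'y'(3)] by auto
  obtain c where c: "c \<in> V" "C = orbit N c" using CD(1) L_R_orbits by blast
  obtain d where d: "d \<in> V" "D = orbit N d" using CD(2) L_R_orbits by blast
  have "y \<in> orbit N x" using same self_in_orbit[of y] by simp
  then have "y' \<in> orbit N x'" using aut_maps_orbit[OF g(1) adj_in_V(1)[OF assms]] g by metis
  then have "orbit N y' = orbit N x'" by (rule orbit_of_orbit_member[OF adj_in_V(1)[OF x'y'(3)]])
  moreover have "orbit N x' = C" using orbit_of_orbit_member[OF c(1)] x'y'(1) c(2) by simp
  moreover have "orbit N y' = D" using orbit_of_orbit_member[OF d(1)] x'y'(2) d(2) by simp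
  ultimately show False using x'y'(4) by simp
qed

lemma bipartition_X: "bipartition E X"
  unfolding bipartition_def
proof (intro allI impI)
  fix x y assume xy: "E x y"
  have "quot_adj E (orbit N x) (orbit N y)"
    using adj_orbits_distinct[OF xy] xy self_in_orbit unfolding quot_adj_def by metis
  then have "(orbit N x \<in> L \<and> orbit N y \<in> R) \<or> (orbit N x \<in> R \<and> orbit N y \<in> L)"
    using quot_adj_orbits_iff adj_in_V[OF xy] by simp
  then show "x \<in> X \<longleftrightarrow> y \<notin> X"
    using adj_in_V[OF xy] orbit_in_L_iff orbit_in_R_iff by blast
qed

lemma adj_opposite_sides: "E x y \<Longrightarrow> x \<in> X \<longleftrightarrow> y \<notin> X"
  using bipartition_X by (simp add: bipartition_def)

lemma same_side_iff_even_gdist: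
  "x \<in> V \<Longrightarrow> y \<in> V \<Longrightarrow> (x \<in> X \<longleftrightarrow> y \<in> X) \<longleftrightarrow> even (gdist V E x y)"
  by (rule bipartition_gdist_parity[OF bipartition_X])

lemma bipartite_graph: "bipartite V E"
  unfolding bipartite_def using X_subset_V bipartition_X by (auto simp: bipartition_def)

lemma girth_4: "has_girth V E 4"
proof -
  have "\<not> has_girth V E 5"
  proof
    assume "has_girth V E 5"
    then obtain xs where "cycle V E xs" "length xs = 5" unfolding has_girth_def by blast
    then show False using bipartition_cycle_even[OF bipartition_X] by fastforce
  qed
  then show ?thesis using girth by blast
qed

lemma bij_betw_neighbours_opposite_orbits:
  assumes v: "v \<in> V"
  shows "bij_betw (orbit N) {w. E v w} (orbit N ` {w \<in> V. w \<in> X \<longleftrightarrow> v \<notin> X})"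
proof (rule bij_betw_imageI)
  show "inj_on (orbit N) {w. E v w}"
  proof (rule inj_onI)
    fix w w' assume w: "w \<in> {w. E v w}" and w': "w' \<in> {w. E v w}" and eq: "orbit N w = orbit N w'"
    have "w \<in> V" "v \<in> X \<longleftrightarrow> w \<notin> X" using w adj_in_V adj_opposite_sides by auto
    then have "\<exists>!z. z \<in> orbit N w \<and> E v z" using ex1_neighbour_in_orbit v by blast
    moreover have "w' \<in> orbit N w" using eq self_in_orbit by simp
    ultimately show "w = w'" using w w' self_in_orbit by blast
  qed
  show "orbit N ` {w. E v w} = orbit N ` {w \<in> V. w \<in> X \<longleftrightarrow> v \<notin> X}"
  proof (intro equalityI subsetI)
    fix D assume "D \<in> orbit N ` {w \<in> V. w \<in> X \<longleftrightarrow> v \<notin> X}"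
    then obtain d where d: "d \<in> V" "d \<in> X \<longleftrightarrow> v \<notin> X" "D = orbit N d" by blast
    then obtain z where z: "z \<in> orbit N d" "E v z" using ex1_neighbour_in_orbit[OF v d(1)] by blast
    then have "orbit N z = D" using orbit_of_orbit_member[OF d(1)] d(3) by simp
    then show "D \<in> orbit N ` {w. E v w}" using z(2) by blast
  qed (use adj_in_V adj_opposite_sides in blast)
qed

lemma valency: "v \<in> V \<Longrightarrow> card {w. E v w} = r"
  using bij_betw_same_card[OF bij_betw_neighbours_opposite_orbits] card_orbits_of_side by metis

lemma orbit_gdist_ge_4:
  assumes x: "x \<in> V" and y: "y \<in> orbit N x" "y \<noteq> x"
  shows "4 \<le> gdist V E x y"
proof -
  have yV: "y \<in> V" using orbit_in_V x y by blast
  have even: "even (gdist V E x y)"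
    using same_side_iff_even_gdist[OF x yV] orbit_same_side[OF x y(1)] by simp
  have "gdist V E x y \<noteq> 0" using gdist_eq_0_iff[OF x yV] y(2) by simp
  moreover have "gdist V E x y \<noteq> 2"
  proof
    assume "gdist V E x y = 2"
    then obtain w where w: "E w y" "gdist V E x w = 1"
      using gdist_SucE[OF x yV] by (metis Suc_1)
    then have wx: "E w x" using gdist_eq_1_iff[OF x] adj_in_V adj_sym by blast
    then have "w \<in> V" "w \<in> X \<longleftrightarrow> x \<notin> X" using adj_in_V adj_opposite_sides by auto
    then have "\<exists>!z. z \<in> orbit N x \<and> E w z" using ex1_neighbour_in_orbit x by blast
    then show False using wx w(1) y self_in_orbit by blast
  qed
  moreover have "gdist V E x y \<noteq> 1" "gdist V E x y \<noteq> 3" using even by auto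
  ultimately show ?thesis by linarith
qed

lemma diam_ge_4: "4 \<le> diam V E"
proof -
  obtain u where u: "u \<in> V" using connected by (auto simp: connected_graph_def)
  obtain u' where u': "u' \<in> orbit N u" "u' \<noteq> u" using orbit_other_point[OF u] .
  then have "u' \<in> V" using orbit_in_V[OF u] by blast
  then show ?thesis using orbit_gdist_ge_4[OF u u'] gdist_le_diam[OF u] by (meson order_trans)
qed

lemma ex_gdist_2_two_common_neighbours:
  obtains a c where "a \<in> V" "c \<in> V" "gdist V E a c = 2"
    "2 \<le> card {w. E c w \<and> gdist V E a w = 1}"
proof -
  obtain xs where "cycle V E xs" "length xs = 4" using girth_4 unfolding has_girth_def by blast
  then obtain a b c d where abcd: "E a b" "E b c" "E c d" "E d a" "a \<noteq> c" "b \<noteq> d"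
    by (rule cycle_4E)
  have V: "a \<in> V" "c \<in> V" using abcd adj_in_V by auto
  have "a \<in> X \<longleftrightarrow> c \<in> X" using adj_opposite_sides abcd(1,2) by blast
  then have "even (gdist V E a c)" using same_side_iff_even_gdist[OF V] by simp
  moreover have "gdist V E a c \<le> 2" using gdist_adj_le[OF V(1) abcd(2)] gdist_adj[OF abcd(1)] by simp
  moreover have "gdist V E a c \<noteq> 0" using gdist_eq_0_iff[OF V] abcd(5) by simp
  ultimately have "gdist V E a c = 2" by (cases "gdist V E a c = 1") auto
  moreover have "{b, d} \<subseteq> {w. E c w \<and> gdist V E a w = 1}"
    using abcd gdist_adj adj_sym by auto
  then have "card {b, d} \<le> card {w. E c w \<and> gdist V E a w = 1}"
    using finite_neighbours by (intro card_mono) (auto intro: finite_subset[rotated])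
  then have "2 \<le> card {w. E c w \<and> gdist V E a w = 1}" using abcd(6) by simp
  ultimately show ?thesis using that V by blast
qed

lemma common_neighbours_constant:
  assumes "transitive_at_distance V E G 2"
  obtains c2 where
    "\<forall>x\<in>V. \<forall>y\<in>V. gdist V E x y = 2 \<longrightarrow> card {w. E y w \<and> gdist V E x w = 1} = c2"
proof -
  obtain a c where "a \<in> V" "c \<in> V" "gdist V E a c = 2"
    by (rule ex_gdist_2_two_common_neighbours)
  then show ?thesis using that card_layer_transitive[OF assms] by blast
qed

lemma nbr_block_eq: "y \<in> V - X \<Longrightarrow> nbr_block E X y = {x. E y x}"
  unfolding nbr_block_def using adj_opposite_sides adj_sym by blast

lemma card_nbr_block_inter_orbit:
  assumes "y \<in> V - X" "C \<in> L" shows "card (nbr_block E X y \<inter> C) = 1"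
proof -
  obtain c where c: "c \<in> X" "C = orbit N c" using assms(2) L_eq by blast
  then have "nbr_block E X y \<inter> C = {z \<in> orbit N c. E y z}" using nbr_block_eq[OF assms(1)] by blast
  then show ?thesis using card_neighbours_in_orbit assms(1) c X_subset_V by auto
qed

lemma Union_R: "\<Union>R = V - X"
  unfolding R_eq
proof (intro equalityI subsetI)
  fix y assume "y \<in> \<Union> (orbit N ` (V - X))"
  then obtain c where "c \<in> V - X" "y \<in> orbit N c" by blast
  then show "y \<in> V - X" using orbit_in_V[of c] orbit_same_side[of c y] by auto
qed (use self_in_orbit in blast)

lemma nbr_block_subset: "nbr_block E X y \<subseteq> X"
  by (auto simp: nbr_block_def)

lemma card_nbr_block: "y \<in> V - X \<Longrightarrow> card (nbr_block E X y) = r"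
  using nbr_block_eq valency by simp

lemma ex1_block_of_parallel_class:
  assumes "\<pi> \<in> R" "x \<in> X" shows "\<exists>!y. y \<in> \<pi> \<and> x \<in> nbr_block E X y"
proof -
  obtain c where c: "c \<in> V - X" "\<pi> = orbit N c" using assms(1) R_eq by blast
  have "\<exists>!y. y \<in> orbit N c \<and> E x y"
    using ex1_neighbour_in_orbit assms(2) X_subset_V c(1) by blast
  then show ?thesis using c assms(2) unfolding nbr_block_def by simp
qed

end

section \<open>The distance-transitive case\<close>

locale Krr_cover_distance_transitive = Krr_cover +
  fixes c2 :: nat
  assumes distance_transitive_4: "distance_transitive_upto V E G 4"
    and c2: "\<forall>x\<in>V. \<forall>y\<in>V. gdist V E x y = 2 \<longrightarrow> card {w. E y w \<and> gdist V E x w = 1} = c2"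
begin

lemma c2_ge_2: "2 \<le> c2"
  using ex_gdist_2_two_common_neighbours c2 by metis

lemma card_common_neighbours_gdist_2:
  assumes "x \<in> V" "y \<in> V" "gdist V E x y = 2"
  shows "card {w. E x w \<and> E y w} = c2"
proof -
  have "{w. E y w \<and> gdist V E x w = 1} = {w. E x w \<and> E y w}"
    using gdist_eq_1_iff[OF assms(1)] adj_in_V(2) adj_sym by blast
  then show ?thesis using c2 assms by metis
qed

text \<open>Some pair at distance 4 lies in one orbit: a vertex at distance 3 from \<open>u\<close> has a
  neighbour in the orbit of \<open>u\<close>, necessarily at distance 4. Distance-transitivity
  spreads this to all such pairs.\<close>

lemma gdist_4_same_orbit:
  assumes ab: "a \<in> V" "b \<in> V" "gdist V E a b = 4"
  shows "b \<in> orbit N a"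
proof (rule ccontr)
  assume b: "b \<notin> orbit N a"
  have no_orbit_pair: "y \<notin> orbit N x" if xy: "x \<in> V" "y \<in> V" "gdist V E x y = 4" for x y
  proof
    assume "y \<in> orbit N x"
    obtain g where "g \<in> G" "g x = a" "g y = b"
      using distance_transitive_4 xy ab
      unfolding distance_transitive_upto_def transitive_at_distance_def by (metis order_refl)
    then show False using aut_maps_orbit[OF _ xy(1) \<open>y \<in> orbit N x\<close>] b by metis
  qed
  obtain u where u: "u \<in> V" using connected by (auto simp: connected_graph_def)
  obtain u' where u': "u' \<in> orbit N u" "u' \<noteq> u" using orbit_other_point[OF u] .
  then have "3 \<le> gdist V E u u'" using orbit_gdist_ge_4[OF u] by force
  then obtain v where v: "v \<in> V" "gdist V E u v = 3"
    using gdist_intermediate[OF u] orbit_in_V[OF u] u'(1) by blast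
  have "v \<in> X \<longleftrightarrow> u \<notin> X" using same_side_iff_even_gdist[OF v(1) u] gdist_sym[OF u v(1)] v(2) by simp
  then obtain z where z: "z \<in> orbit N u" "E v z" using ex1_neighbour_in_orbit[OF v(1) u] by blast
  have "z \<noteq> u" using z(2) v(2) gdist_adj adj_sym by force
  then have "gdist V E u z = 4"
    using orbit_gdist_ge_4[OF u z(1)] gdist_adj_le[OF u z(2)] v(2) by simp
  then show False using no_orbit_pair[OF u _] z(1) orbit_in_V[OF u] by blast
qed

text \<open>On a geodesic \<open>u, \<dots>, v\<^sub>3, v\<^sub>4, v\<^sub>5\<close> a second common neighbour of \<open>v\<^sub>3\<close>
  and \<open>v\<^sub>5\<close> would, like \<open>v\<^sub>4\<close>, be at distance 4 from \<open>u\<close>, so \<open>v\<^sub>3\<close> would have two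
  neighbours in the orbit of \<open>u\<close>.\<close>

lemma gdist_le_4:
  assumes u: "u \<in> V" and "v \<in> V" shows "gdist V E u v \<le> 4"
proof (rule ccontr)
  assume "\<not> ?thesis"
  then obtain v5 where v5: "v5 \<in> V" "gdist V E u v5 = 5"
    using gdist_intermediate[OF u \<open>v \<in> V\<close>, of 5] by force
  have "gdist V E u v5 = Suc 4" using v5(2) by simp
  then obtain v4 where v4: "E v4 v5" "gdist V E u v4 = 4" using gdist_SucE[OF u v5(1)] by blast
  have "gdist V E u v4 = Suc 3" using v4(2) by simp
  then obtain v3 where v3: "E v3 v4" "gdist V E u v3 = 3"
    using gdist_SucE[OF u adj_in_V(1)[OF v4(1)]] by blast
  have V: "v3 \<in> V" "v4 \<in> V" using v3(1) adj_in_V by auto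
  have "gdist V E v3 v5 = 2"
  proof -
    have "gdist V E v3 v5 \<le> 2" using gdist_adj_le[OF V(1) v4(1)] gdist_adj[OF v3(1)] by simp
    moreover have "v3 \<in> X \<longleftrightarrow> v5 \<in> X" using adj_opposite_sides v3(1) v4(1) by blast
    then have "even (gdist V E v3 v5)" using same_side_iff_even_gdist V(1) v5(1) by blast
    moreover have "v3 \<noteq> v5" using v3(2) v5(2) by auto
    then have "gdist V E v3 v5 \<noteq> 0" using gdist_eq_0_iff V(1) v5(1) by blast
    ultimately show ?thesis by (cases "gdist V E v3 v5 = 1") auto
  qed
  then have "card {w. E v3 w \<and> E v5 w} = c2" using card_common_neighbours_gdist_2 V(1) v5(1) by blast
  then obtain w where w: "E v3 w" "E v5 w" "w \<noteq> v4"
    using c2_ge_2 card_mono[of "{v4}" "{w. E v3 w \<and> E v5 w}"] by force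
  have "gdist V E u w = 4"
    using gdist_adj_le[OF u w(1)] gdist_adj_le[OF u adj_sym[OF w(2)]] v3(2) v5(2) by simp
  then have "w \<in> orbit N u" "v4 \<in> orbit N u"
    using gdist_4_same_orbit u v4(2) V(2) adj_in_V(2)[OF w(1)] by blast+
  moreover have "v3 \<in> X \<longleftrightarrow> u \<notin> X"
    using same_side_iff_even_gdist[OF V(1) u] gdist_sym[OF u V(1)] v3(2) by simp
  ultimately show False using ex1_neighbour_in_orbit[OF V(1) u] w(1,3) v3(1) by blast
qed

lemma diam_eq_4: "diam V E = 4"
  using diam_le[OF gdist_le_4] diam_ge_4 by simp

lemma gdist_eq_4_iff:
  assumes "x \<in> V" "y \<in> V" shows "gdist V E x y = 4 \<longleftrightarrow> y \<in> orbit N x \<and> y \<noteq> x"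
  using gdist_4_same_orbit gdist_eq_0_iff orbit_gdist_ge_4 gdist_le_4 assms
  by (metis le_antisym zero_neq_numeral)

lemma gdist_2_if_same_side:
  assumes "x \<in> V" "y \<in> V" "x \<in> X \<longleftrightarrow> y \<in> X" "y \<notin> orbit N x"
  shows "gdist V E x y = 2"
proof -
  have even: "even (gdist V E x y)" using same_side_iff_even_gdist assms(1-3) by blast
  have "gdist V E x y \<noteq> 0" using gdist_eq_0_iff assms self_in_orbit by metis
  moreover have "gdist V E x y \<noteq> 4" using gdist_eq_4_iff assms by blast
  moreover have "gdist V E x y \<noteq> 1" "gdist V E x y \<noteq> 3" using even by auto
  ultimately show ?thesis using gdist_le_4[OF assms(1,2)] by linarith
qed

lemma card_common_neighbours:
  assumes "x \<in> V" "y \<in> V" "x \<in> X \<longleftrightarrow> y \<in> X" "y \<notin> orbit N x"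
  shows "card {w. E x w \<and> E y w} = c2"
  using card_common_neighbours_gdist_2 gdist_2_if_same_side assms by blast

lemma r_eq_m_c2: "r = m * c2"
proof -
  \<comment> \<open>Count the edges between the neighbours of \<open>u\<close> and another orbit \<open>B\<close> on the side of \<open>u\<close>.\<close>
  obtain u where u: "u \<in> V" using connected by (auto simp: connected_graph_def)
  let ?S = "orbit N ` {w \<in> V. w \<in> X \<longleftrightarrow> u \<in> X}"
  have "\<not> ?S \<subseteq> {orbit N u}"
    using card_orbits_of_side[of "u \<in> X"] r_ge_3 card_mono[of "{orbit N u}" ?S] by auto
  then obtain w0 where w0: "w0 \<in> V" "w0 \<in> X \<longleftrightarrow> u \<in> X" "orbit N w0 \<noteq> orbit N u"
    by blast
  let ?B = "orbit N w0"
  have B: "finite ?B" "?B \<subseteq> V" using orbit_in_V[OF w0(1)] finite_V finite_subset by auto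
  have "(\<Sum>v\<in>{v. E u v}. card {w\<in>?B. E v w}) = (\<Sum>w\<in>?B. card {v\<in>{v. E u v}. E v w})"
    using sum_card_filter_swap[OF finite_neighbours B(1)] .
  moreover have "card {w\<in>?B. E v w} = 1" if "E u v" for v
    using card_neighbours_in_orbit[OF adj_in_V(2)[OF that] w0(1)] w0(2) adj_opposite_sides[OF that]
    by simp
  moreover have "card {v\<in>{v. E u v}. E v w} = c2" if w: "w \<in> ?B" for w
  proof -
    have "w \<in> V" "w \<in> X \<longleftrightarrow> u \<in> X" using w B orbit_same_side[OF w0(1)] w0(2) by auto
    moreover have "w \<notin> orbit N u"
      using w w0(3) orbit_of_orbit_member[OF w0(1)] orbit_of_orbit_member[OF u] by metis
    ultimately have "card {v. E u v \<and> E w v} = c2" using card_common_neighbours u by blast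
    moreover have "{v\<in>{v. E u v}. E v w} = {v. E u v \<and> E w v}" using adj_sym by blast
    ultimately show ?thesis by simp
  qed
  ultimately have "card {v. E u v} = card ?B * c2" by simp
  then show ?thesis using valency[OF u] orbit_card w0(1) by simp
qed

lemma card_closer_gdist_1:
  assumes "u \<in> V" "v \<in> V" "gdist V E u v = 1"
  shows "card {w. E v w \<and> Suc (gdist V E u w) = gdist V E u v} = 1"
proof -
  have "E v u" using assms gdist_eq_1_iff adj_sym by blast
  moreover have "w = u" if "E v w" "gdist V E u w = 0" for w
    using that gdist_eq_0_iff[OF assms(1) adj_in_V(2)] by blast
  ultimately have "{w. E v w \<and> Suc (gdist V E u w) = gdist V E u v} = {u}"
    using assms(3) gdist_self[OF assms(1)] by auto
  then show ?thesis by simp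
qed

lemma card_farther_gdist_3:
  assumes u: "u \<in> V" and v: "v \<in> V" and uv: "gdist V E u v = 3"
  shows "card {w. E v w \<and> gdist V E u w = Suc (gdist V E u v)} = 1"
proof -
  have "{w. E v w \<and> gdist V E u w = Suc (gdist V E u v)} = {z \<in> orbit N u. E v z}"
  proof (intro equalityI subsetI)
    fix z assume "z \<in> {w. E v w \<and> gdist V E u w = Suc (gdist V E u v)}"
    then show "z \<in> {z \<in> orbit N u. E v z}" using gdist_4_same_orbit[OF u] adj_in_V uv by auto
  next
    fix z assume z: "z \<in> {z \<in> orbit N u. E v z}"
    then have "z \<noteq> u" using uv gdist_adj adj_sym by force
    then show "z \<in> {w. E v w \<and> gdist V E u w = Suc (gdist V E u v)}"
      using z gdist_eq_4_iff[OF u] orbit_in_V[OF u] uv by auto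
  qed
  moreover have "v \<in> X \<longleftrightarrow> u \<notin> X" using same_side_iff_even_gdist[OF v u] gdist_sym[OF u v] uv by simp
  ultimately show ?thesis using card_neighbours_in_orbit[OF v u] by simp
qed

lemma card_farther_gdist_4:
  assumes "u \<in> V" "gdist V E u v = 4"
  shows "card {w. E v w \<and> gdist V E u w = Suc (gdist V E u v)} = 0"
proof -
  have "gdist V E u w \<noteq> 5" if "E v w" for w
    using gdist_le_4[OF assms(1) adj_in_V(2)[OF that]] by simp
  then have "{w. E v w \<and> gdist V E u w = Suc (gdist V E u v)} = {}" using assms(2) by auto
  then show ?thesis by (metis card.empty)
qed

lemma intersection_array: "has_intersection_array V E [r, r - 1, r - c2, 1] [1, c2, r - 1, r]"
  unfolding has_intersection_array_def Let_def diam_eq_4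
proof (intro conjI ballI)
  \<comment> \<open>\<open>b\<^sub>i + c\<^sub>i = r\<close>, and \<open>c\<^sub>1, c\<^sub>2, b\<^sub>3, b\<^sub>4\<close> are known directly.\<close>
  fix u v assume u: "u \<in> V" and v: "v \<in> V"
  define i where "i = gdist V E u v"
  let ?F = "card {w. E v w \<and> gdist V E u w = Suc i}"
  let ?C = "card {w. E v w \<and> gdist V E u w = i - 1}"
  have sum: "?F + card {w. E v w \<and> Suc (gdist V E u w) = i} = r"
    using bipartition_card_farther_closer[OF bipartition_X u, of v] valency[OF v] i_def by simp
  have C: "?C = card {w. E v w \<and> Suc (gdist V E u w) = i}" if "1 \<le> i"
    using that by (intro arg_cong[where f = card] Collect_cong) auto
  have "i \<le> 4" using gdist_le_4[OF u v] i_def by simp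
  then consider "i = 0" | "i = 1" | "i = 2" | "i = 3" | "i = 4" by linarith
  then have "(i < 4 \<longrightarrow> ?F = [r, r - 1, r - c2, 1] ! i) \<and>
      (1 \<le> i \<longrightarrow> ?C = [1, c2, r - 1, r] ! (i - 1))"
  proof cases
    case 1
    then show ?thesis using sum by simp
  next
    case 2
    then show ?thesis using sum C card_closer_gdist_1[OF u v] i_def by simp
  next
    case 3
    then have "card {w. E v w \<and> Suc (gdist V E u w) = i} = c2"
      using c2 u v i_def gdist_eq_1_iff adj_in_V(2) by (simp add: numeral_2_eq_2)
    then show ?thesis using sum C 3 by (simp add: numeral_2_eq_2)
  next
    case 4
    then show ?thesis using sum C card_farther_gdist_3[OF u v] i_def by (simp add: numeral_3_eq_3)
  next
    case 5
    then show ?thesis using sum C card_farther_gdist_4[OF u] i_def by (simp add: eval_nat_numeral)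
  qed
  then show "i < 4 \<longrightarrow> ?F = [r, r - 1, r - c2, 1] ! i" "1 \<le> i \<longrightarrow> ?C = [1, c2, r - 1, r] ! (i - 1)"
    by simp_all
qed (use connected in simp_all)

lemma hadamard_if_m_eq_2: "m = 2 \<Longrightarrow> hadamard_graph_valency V E r"
  using intersection_array r_eq_m_c2 unfolding hadamard_graph_valency_def by auto

lemma antipodal_rel_iff:
  assumes "u \<in> V" "v \<in> V" shows "antipodal_rel V E u v \<longleftrightarrow> v \<in> orbit N u"
  unfolding antipodal_rel_def diam_eq_4
  using gdist_eq_0_iff[OF assms] gdist_eq_4_iff[OF assms] self_in_orbit[of u] by auto

lemma antipodal_classes_eq: "antipodal_classes V E = orbit N ` V"
  unfolding antipodal_classes_def
proof (rule image_cong[OF refl])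
  fix u assume "u \<in> V"
  then show "{v \<in> V. antipodal_rel V E u v} = orbit N u"
    using antipodal_rel_iff orbit_in_V by blast
qed

lemma antipodal_cover: "antipodal_cover_Krr V E m r"
  unfolding antipodal_cover_Krr_def antipodal_classes_eq
proof (intro conjI)
  show "antipodal V E"
    unfolding antipodal_def
  proof (intro ballI impI)
    fix u v w assume V: "u \<in> V" "v \<in> V" "w \<in> V"
      and "antipodal_rel V E u v \<and> antipodal_rel V E v w"
    then have "v \<in> orbit N u" "w \<in> orbit N v" using antipodal_rel_iff by auto
    then show "antipodal_rel V E u w"
      using antipodal_rel_iff V orbit_of_orbit_member[OF V(1)] by simp
  qed
  show "quotient_is_Krr E (orbit N ` V) r"
    unfolding quotient_is_Krr_def using L_R_orbits L_R_disjoint card_L card_R quot_adj_L_R by blast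
qed (use orbit_card cover in auto)

lemma card_common_blocks:
  assumes x: "x \<in> X" "x' \<in> X" and classes: "\<not> (\<exists>C\<in>L. x \<in> C \<and> x' \<in> C)"
  shows "card {y \<in> V - X. x \<in> nbr_block E X y \<and> x' \<in> nbr_block E X y} = c2"
proof -
  have "orbit N x \<in> L" using x(1) X_subset_V orbit_in_L_iff by blast
  then have "x' \<notin> orbit N x" using classes self_in_orbit by blast
  moreover have "{y \<in> V - X. x \<in> nbr_block E X y \<and> x' \<in> nbr_block E X y} = {w. E x w \<and> E x' w}"
    unfolding nbr_block_def using adj_opposite_sides adj_in_V adj_sym x(1) by blast
  ultimately show ?thesis using card_common_neighbours x X_subset_V by auto
qed

lemma card_nbr_block_inter:
  assumes "\<pi> \<in> R" "\<rho> \<in> R" "\<pi> \<noteq> \<rho>" "y \<in> \<pi>" "y' \<in> \<rho>"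
  shows "card (nbr_block E X y \<inter> nbr_block E X y') = c2"
proof -
  obtain c d where c: "c \<in> V - X" "\<pi> = orbit N c" and d: "d \<in> V - X" "\<rho> = orbit N d"
    using assms(1,2) R_eq by blast
  have y: "y \<in> V - X" "y' \<in> V - X"
    using assms(4,5) c d orbit_in_V orbit_same_side by auto
  have "orbit N y = \<pi>" "orbit N y' = \<rho>"
    using orbit_of_orbit_member[of c y] orbit_of_orbit_member[of d y'] c d assms(4,5) by auto
  then have "y' \<notin> orbit N y"
    using assms(3) orbit_of_orbit_member[of y y'] y by auto
  moreover have "nbr_block E X y \<inter> nbr_block E X y' = {w. E y w \<and> E y' w}"
    using nbr_block_eq y by auto
  ultimately show ?thesis using card_common_neighbours y by auto
qed

lemma resolvable_design: "RGD X L (V - X) (nbr_block E X) R r c2 m"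
  unfolding RGD_def
proof (intro conjI)
  show "finite X" using X_subset_V finite_V finite_subset by blast
  show "\<forall>C\<in>L. \<forall>D\<in>L. C \<noteq> D \<longrightarrow> C \<inter> D = {}"
    by (intro ballI impI orbit_classes_disjoint) (use L_subset_orbits in auto)
  show "\<forall>\<pi>\<in>R. \<forall>\<rho>\<in>R. \<pi> \<noteq> \<rho> \<longrightarrow> \<pi> \<inter> \<rho> = {}"
    by (intro ballI impI orbit_classes_disjoint) (use R_subset_orbits in auto)
  show "\<forall>C\<in>L. C \<noteq> {} \<and> card C = m" "\<forall>\<pi>\<in>R. \<pi> \<noteq> {}"
    using orbit_class_card orbit_class_nonempty L_subset_orbits R_subset_orbits by (meson subsetD)+
  show "\<forall>y\<in>V - X. nbr_block E X y \<subseteq> X \<and> card (nbr_block E X y) = r \<and>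
      (\<forall>C\<in>L. card (nbr_block E X y \<inter> C) = 1)"
    using nbr_block_subset card_nbr_block card_nbr_block_inter_orbit by blast
  show "\<forall>x\<in>X. \<forall>x'\<in>X. \<not> (\<exists>C\<in>L. x \<in> C \<and> x' \<in> C) \<longrightarrow>
      card {y \<in> V - X. x \<in> nbr_block E X y \<and> x' \<in> nbr_block E X y} = c2"
    using card_common_blocks by blast
  show "\<Union>R = V - X" by (rule Union_R)
  show "\<forall>\<pi>\<in>R. \<forall>x\<in>X. \<exists>!y. y \<in> \<pi> \<and> x \<in> nbr_block E X y"
    using ex1_block_of_parallel_class by blast
  show "card X = r * m" by (rule card_X)
  show "\<Union>L = X" by (simp add: X_def)
qed

lemma incidence_graph: "incidence_graph_of V E X (V - X)"
  unfolding incidence_graph_of_def using X_subset_V adj_in_V adj_opposite_sides by blast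

lemma incidence_graph_of_resolvable_design:
  "\<exists>X Y P Pi. incidence_graph_of V E X Y \<and> RGD X P Y (nbr_block E X) Pi r c2 m \<and>
     (\<forall>\<pi>\<in>Pi. \<forall>\<rho>\<in>Pi. \<pi> \<noteq> \<rho> \<longrightarrow>
        (\<forall>y\<in>\<pi>. \<forall>y'\<in>\<rho>. card (nbr_block E X y \<inter> nbr_block E X y') = c2))"
  using incidence_graph resolvable_design card_nbr_block_inter by blast

end

theorem lemma5p10:
  fixes V :: "'a set" and E :: "'a \<Rightarrow> 'a \<Rightarrow> bool"
    and G N :: "('a \<Rightarrow> 'a) set" and m r :: nat
  assumes graph: "simple_graph V E" and conn: "connected_graph V E"
    and GT: "geodesic_transitive V E G 3"
    and girth: "has_girth V E 4 \<or> has_girth V E 5"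
    and G_aut: "aut_subgroup V E G"
    and N_normal: "normal_subgroup V N G"
    and orbits_m: "\<forall>x\<in>V. card (orbit N x) = m" and m_ge: "m \<ge> 2"
    and quot: "quotient_is_Krr E (orbit N ` V) r" and r_ge: "r \<ge> 3"
    and cover: "is_cover E (orbit N ` V)"
  shows "bipartite V E \<and> has_girth V E 4 \<and> diam V E \<ge> 4 \<and>
    ((m = 2 \<and> hadamard_graph_valency V E r)
     \<or> (\<exists>c2. distance_transitive V E G \<and> antipodal_cover_Krr V E m r \<and>
          (\<exists>X Y P Pi. incidence_graph_of V E X Y \<and> RGD X P Y (nbr_block E X) Pi r c2 m \<and>
              (\<forall>\<pi>\<in>Pi. \<forall>\<rho>\<in>Pi. \<pi> \<noteq> \<rho> \<longrightarrow>
                 (\<forall>y\<in>\<pi>. \<forall>y'\<in>\<rho>. card (nbr_block E X y \<inter> nbr_block E X y') = c2))) \<and>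
          r = m * c2 \<and>
          has_intersection_array V E [r, r - 1, r - c2, 1] [1, c2, r - 1, r] \<and>
          c2 \<ge> 2 \<and> m \<ge> 3)
     \<or> \<not> distance_transitive_upto V E G 4)"
proof -
  obtain L R where LR: "L \<union> R = orbit N ` V" "L \<inter> R = {}" "card L = r" "card R = r"
    "\<forall>B\<in>orbit N ` V. \<forall>C\<in>orbit N ` V.
       quot_adj E B C \<longleftrightarrow> (B \<in> L \<and> C \<in> R) \<or> (B \<in> R \<and> C \<in> L)"
    using quot unfolding quotient_is_Krr_def by blast
  interpret Krr_cover V E G N m r L R
    by unfold_locales (use assms LR in auto)
  have shape: "bipartite V E \<and> has_girth V E 4 \<and> diam V E \<ge> 4"
    using bipartite_graph girth_4 diam_ge_4 by simp
  show ?thesis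
  proof (cases "distance_transitive_upto V E G 4")
    case True
    then have "transitive_at_distance V E G 2" by (simp add: distance_transitive_upto_def)
    then obtain c2 where
      "\<forall>x\<in>V. \<forall>y\<in>V. gdist V E x y = 2 \<longrightarrow> card {w. E y w \<and> gdist V E x w = 1} = c2"
      by (rule common_neighbours_constant)
    then interpret Krr_cover_distance_transitive V E G N m r L R c2
      using True by unfold_locales
    have "distance_transitive V E G"
      using True by (simp add: distance_transitive_def diam_eq_4)
    moreover have "m = 2 \<or> 3 \<le> m" using m_ge by linarith
    ultimately show ?thesis
      using shape hadamard_if_m_eq_2 antipodal_cover incidence_graph_of_resolvable_design
        r_eq_m_c2 intersection_array c2_ge_2 by blast
  qed (use shape in blast)
qed

end
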